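(* Consider the Bregman proximal augmented Lagrangian method described in the context, with $\psi,\phi$ Legendre, and define the ergodic iterates $\breve s^K=\frac{\sum_{k=0}^K\sigma_ks^k}{\sum_{k=0}^K\sigma_k}$, $\breve y^K=\frac{\sum_{k=0}^K\sigma_ky^{k+1}}{\sum_{k=0}^K\sigma_k}$. Then for every $x\in\operatorname{dom}\psi$, $y\in\operatorname{dom}\phi$ and $K\ge0$, $$L(\breve s^K,y)-L(x,\breve y^K)\le\frac{1}{\sum_{k=0}^K\sigma_k}\big(D_\psi(x,x^0)+D_\phi(y,y^0)\big).$$ If in addition $\operatorname{dom}f\subseteq\operatorname{cl}\operatorname{dom}\psi$ and $\operatorname{dom}g^*\subseteq\operatorname{cl}\operatorname{dom}\phi$, then every limit point $(\breve s^\infty,\breve y^\infty)$ of $\{(\breve s^K,\breve y^K)\}_{K\ge0}$ is a saddle point of $L$, i.e. $L(\breve s^\infty,y)\le L(x,\breve y^\infty)$ for all $x\in\mathbb{R}^n$, $y\in\mathbb{R}^m$.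
   Context: Let $f\in\Gamma_0(\mathbb{R}^n)$, $g\in\Gamma_0(\mathbb{R}^m)$ (proper lsc convex), $A\in\mathbb{R}^{m\times n}$, $b\in\mathbb{R}^m$, $\mathcal{A}(x)=Ax-b$. $L(x,y)=f(x)+\langle\mathcal{A}(x),y\rangle-g^*(y)$; KKT operator $T(x,y)=(\partial f(x)+A^\top y)\times(\partial g^*(y)+b-Ax)$ (maximal monotone). A function $h\in\Gamma_0$ is Legendre if essentially smooth ($\operatorname{int}\operatorname{dom}h\ne\emptyset$, differentiable there, $\|\nabla h(z^\nu)\|\to\infty$ whenever $\operatorname{int}\operatorname{dom}h\ni z^\nu\to z\in\operatorname{bdry}\operatorname{dom}h$) and essentially strictly convex (strictly convex on every convex subset of $\operatorname{dom}\partial h$); $\nabla h^*$ is the inverse of $\nabla h$ on interiors of domains. $D_h(a,c)=h(a)-h(c)-\langle\nabla h(c),a-c\rangle$ for $a\in\operatorname{dom}h$, $c\in\operatorname{int}\operatorname{dom}h$, $+\infty$ otherwise. Let $\psi\in\Gamma_0(\mathbb{R}^n)$, $\phi\in\Gamma_0(\mathbb{R}^m)$ be Legendre, $\Phi(x,y)=\psi(x)+\phi(y)$, and assume $\operatorname{int}\operatorname{dom}\Phi\cap\operatorname{dom}T\ne\emptyset$ (in particular $\operatorname{dom}f\cap\operatorname{int}\operatorname{dom}\psi\ne\emptyset$ and $\operatorname{dom}g^*\cap\operatorname{int}\operatorname{dom}\phi\ne\emptyset$). Bregman proximal augmented Lagrangian method: given $x^0\in\operatorname{int}\operatorname{dom}\psi$,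 $y^0\in\operatorname{int}\operatorname{dom}\phi$, step sizes $\sigma_k\ge\sigma>0$ and $\rho_k\in[0,1)$, it generates $s^k\in\operatorname{dom}\psi$, $x^{k+1},y^{k+1},v^k,u^k$ with $(v^k,u^k)\in T(s^k,y^{k+1})$, $x^{k+1}=\nabla\psi^*(\nabla\psi(x^k)-\sigma_kv^k)\in\operatorname{int}\operatorname{dom}\psi$, $y^{k+1}=\nabla\phi^*(\nabla\phi(y^k)-\sigma_ku^k)\in\operatorname{int}\operatorname{dom}\phi$, and $D_\psi(s^k,x^{k+1})\le\rho_k\big(D_\psi(s^k,x^k)+D_\phi(y^{k+1},y^k)\big)$. *)

theory Defs
  imports "HOL-Analysis.Analysis"
begin

definition edom :: "('a \<Rightarrow> ereal) \<Rightarrow> 'a set" where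
  "edom h = {x. h x < \<infinity>}"

definition proper_fun :: "('a \<Rightarrow> ereal) \<Rightarrow> bool" where
  "proper_fun h \<longleftrightarrow> (\<forall>x. h x > -\<infinity>) \<and> (\<exists>x. h x < \<infinity>)"

definition convex_fun :: "('a::real_vector \<Rightarrow> ereal) \<Rightarrow> bool" where
  "convex_fun h \<longleftrightarrow> (\<forall>x y t. 0 \<le> t \<and> t \<le> 1 \<longrightarrow>
      h ((1 - t) *\<^sub>R x + t *\<^sub>R y) \<le> ereal (1 - t) * h x + ereal t * h y)"

definition lsc_fun :: "('a::topological_space \<Rightarrow> ereal) \<Rightarrow> bool" where
  "lsc_fun h \<longleftrightarrow> (\<forall>c. closed {x. h x \<le> c})"

definition Gamma0 :: "('a::real_normed_vector \<Rightarrow> ereal) \<Rightarrow> bool" where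
  "Gamma0 h \<longleftrightarrow> proper_fun h \<and> convex_fun h \<and> lsc_fun h"

definition conj_fun :: "('a::real_inner \<Rightarrow> ereal) \<Rightarrow> 'a \<Rightarrow> ereal" where
  "conj_fun h y = (SUP x. ereal (inner x y) - h x)"

definition subdiff :: "('a::real_inner \<Rightarrow> ereal) \<Rightarrow> 'a \<Rightarrow> 'a set" where
  "subdiff h x = {v. h x < \<infinity> \<and> (\<forall>z. h z \<ge> h x + ereal (inner v (z - x)))}"

definition grad :: "('a::real_inner \<Rightarrow> ereal) \<Rightarrow> 'a \<Rightarrow> 'a" where
  "grad h z = (SOME D. GDERIV (\<lambda>w. real_of_ereal (h w)) z :> D)"

definition ess_smooth :: "('a::real_inner \<Rightarrow> ereal) \<Rightarrow> bool" where
  "ess_smooth h \<longleftrightarrow> interior (edom h) \<noteq> {}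
     \<and> (\<forall>z \<in> interior (edom h). \<exists>D. GDERIV (\<lambda>w. real_of_ereal (h w)) z :> D)
     \<and> (\<forall>zs z. (\<forall>k. zs k \<in> interior (edom h)) \<longrightarrow> zs \<longlonglongrightarrow> z \<longrightarrow> z \<in> frontier (edom h)
           \<longrightarrow> filterlim (\<lambda>k. norm (grad h (zs k))) at_top sequentially)"

definition ess_strictly_convex :: "('a::real_inner \<Rightarrow> ereal) \<Rightarrow> bool" where
  "ess_strictly_convex h \<longleftrightarrow> (\<forall>C. convex C \<and> C \<subseteq> {x. subdiff h x \<noteq> {}} \<longrightarrow>
     (\<forall>x\<in>C. \<forall>y\<in>C. \<forall>t. x \<noteq> y \<and> 0 < t \<and> t < 1 \<longrightarrow>
        h ((1 - t) *\<^sub>R x + t *\<^sub>R y) < ereal (1 - t) * h x + ereal t * h y))"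

definition legendre :: "('a::real_inner \<Rightarrow> ereal) \<Rightarrow> bool" where
  "legendre h \<longleftrightarrow> Gamma0 h \<and> ess_smooth h \<and> ess_strictly_convex h"

definition bregman :: "('a::real_inner \<Rightarrow> ereal) \<Rightarrow> 'a \<Rightarrow> 'a \<Rightarrow> ereal" where
  "bregman h a c = (if a \<in> edom h \<and> c \<in> interior (edom h)
      then h a - h c - ereal (inner (grad h c) (a - c)) else \<infinity>)"

text \<open>Lagrangian L(x,y) = f(x) + <Ax-b,y> - g*(y), with the standard convention
  L(x,y) = +\<infinity> for x outside dom f.\<close>

definition lagr :: "(real^'n \<Rightarrow> ereal) \<Rightarrow> (real^'m \<Rightarrow> ereal) \<Rightarrow> real^'n^'m \<Rightarrow> real^'m
    \<Rightarrow> real^'n \<Rightarrow> real^'m \<Rightarrow> ereal" where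
  "lagr f g A b x y = (if f x = \<infinity> then \<infinity>
      else f x + ereal (inner (A *v x - b) y) - conj_fun g y)"

definition kkt :: "(real^'n \<Rightarrow> ereal) \<Rightarrow> (real^'m \<Rightarrow> ereal) \<Rightarrow> real^'n^'m \<Rightarrow> real^'m
    \<Rightarrow> real^'n \<Rightarrow> real^'m \<Rightarrow> ((real^'n) \<times> (real^'m)) set" where
  "kkt f g A b x y = {(v, u). v - transpose A *v y \<in> subdiff f x
      \<and> u - (b - A *v x) \<in> subdiff (conj_fun g) y}"

end

theory Submission
  imports Defs
begin

text \<open>By the KKT inclusion, the Lagrangian gap \<open>L(s\<^sup>k, y) - L(x, y\<^sup>k\<^sup>+\<^sup>1)\<close> is at most
  \<open>\<langle>v\<^sup>k, s\<^sup>k - x\<rangle> + \<langle>u\<^sup>k, y\<^sup>k\<^sup>+\<^sup>1 - y\<rangle>\<close>. The mirror updates write \<open>\<sigma>\<^sub>k v\<^sup>k\<close> and \<open>\<sigma>\<^sub>k u\<^sup>k\<close> as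
  differences of gradients of \<open>\<psi>\<close> and \<open>\<phi>\<close>, and the four-point identity of Bregman distances
  bounds \<open>\<sigma>\<^sub>k\<close> times the gap by the decrease of the potential
  \<open>D\<^sub>\<psi>(x, x\<^sup>k) + D\<^sub>\<phi>(y, y\<^sup>k)\<close>; the inexactness criterion with \<open>\<rho>\<^sub>k < 1\<close> absorbs the error
  term. Telescoping, and Jensen's inequality for the convex-concave \<open>L\<close>, give the ergodic
  bound. Since \<open>\<Sum>\<sigma>\<^sub>k \<ge> (K + 1) \<sigma>\<close>, the bound tends to zero, and lower semicontinuity of
  \<open>f\<close> and \<open>g\<^sup>*\<close> yields the saddle inequality at a limit point for \<open>x \<in> dom \<psi>\<close>,
  \<open>y \<in> dom \<phi>\<close>. Moving along segments towards the interior point provided by the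
  qualification condition extends it to all of \<open>dom f \<times> dom g\<^sup>*\<close>, which suffices because
  \<open>L\<close> is \<open>+\<infinity>\<close> or \<open>-\<infinity>\<close> elsewhere.\<close>

lemma not_edom_eq_infinity: "x \<notin> edom h \<Longrightarrow> h x = \<infinity>"
  unfolding edom_def by (cases "h x") auto

lemma convex_edom:
  assumes "convex_fun h"
  shows "convex (edom h)"
  unfolding convex_alt
proof (intro ballI allI impI)
  fix x y and t :: real
  assume "x \<in> edom h" "y \<in> edom h" "0 \<le> t \<and> t \<le> 1"
  moreover have "h ((1 - t) *\<^sub>R x + t *\<^sub>R y) \<le> ereal (1 - t) * h x + ereal t * h y"
    using assms calculation(3) unfolding convex_fun_def by blast
  ultimately show "(1 - t) *\<^sub>R x + t *\<^sub>R y \<in> edom h"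
    unfolding edom_def by (cases "h x"; cases "h y") (auto split: if_splits)
qed

lemma convex_on_real_of_convex_fun:
  assumes "convex_fun h" "proper_fun h"
  shows "convex_on (edom h) (\<lambda>x. real_of_ereal (h x))"
proof (rule convex_onI)
  fix t :: real and x y assume "0 < t" "t < 1" "x \<in> edom h" "y \<in> edom h"
  moreover have "h ((1 - t) *\<^sub>R x + t *\<^sub>R y) \<le> ereal (1 - t) * h x + ereal t * h y"
    using assms(1) calculation(1,2) unfolding convex_fun_def by simp
  moreover have "h ((1 - t) *\<^sub>R x + t *\<^sub>R y) > -\<infinity>"
    using assms(2) unfolding proper_fun_def by blast
  ultimately show "real_of_ereal (h ((1 - t) *\<^sub>R x + t *\<^sub>R y))
      \<le> (1 - t) * real_of_ereal (h x) + t * real_of_ereal (h y)"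
    using assms(2) unfolding proper_fun_def edom_def
    by (cases "h x"; cases "h y"; cases "h ((1 - t) *\<^sub>R x + t *\<^sub>R y)") auto
qed (rule convex_edom[OF assms(1)])

lemma conj_fun_gt_minf:
  assumes "proper_fun g"
  shows "conj_fun g y > -\<infinity>"
proof -
  obtain x where x: "g x < \<infinity>"
    using assms unfolding proper_fun_def by auto
  have "ereal (inner x y) - g x \<le> conj_fun g y"
    unfolding conj_fun_def by (rule SUP_upper) simp
  moreover have "ereal (inner x y) - g x > -\<infinity>"
    using x by (cases "g x") auto
  ultimately show ?thesis by auto
qed

lemma convex_fun_conj_fun:
  assumes "proper_fun g"
  shows "convex_fun (conj_fun g)"
  unfolding convex_fun_def
proof (intro allI impI)
  fix y1 y2 and t :: real
  assume t: "0 \<le> t \<and> t \<le> 1"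
  show "conj_fun g ((1 - t) *\<^sub>R y1 + t *\<^sub>R y2) \<le> ereal (1 - t) * conj_fun g y1 + ereal t * conj_fun g y2"
    unfolding conj_fun_def [of g "(1 - t) *\<^sub>R y1 + t *\<^sub>R y2"]
  proof (rule SUP_least)
    fix x
    show "ereal (inner x ((1 - t) *\<^sub>R y1 + t *\<^sub>R y2)) - g x
        \<le> ereal (1 - t) * conj_fun g y1 + ereal t * conj_fun g y2"
    proof (cases "g x")
      case (real r)
      have "ereal (inner x y1) - g x \<le> conj_fun g y1" "ereal (inner x y2) - g x \<le> conj_fun g y2"
        unfolding conj_fun_def by (rule SUP_upper; simp)+
      then have "ereal (1 - t) * ereal (inner x y1 - r) + ereal t * ereal (inner x y2 - r)
          \<le> ereal (1 - t) * conj_fun g y1 + ereal t * conj_fun g y2"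
        using t real by (intro add_mono ereal_mult_left_mono) auto
      then show ?thesis
        using real by (simp add: inner_add_right algebra_simps)
    qed (use assms in \<open>auto simp: proper_fun_def\<close>)
  qed
qed

lemma lsc_fun_conj_fun: "lsc_fun (conj_fun g)"
  unfolding lsc_fun_def
proof
  fix c
  have "closed {y. ereal (inner x y) - g x \<le> c}" for x
  proof (cases "g x")
    case (real r)
    have "continuous_on UNIV (\<lambda>y. ereal (inner x y - r))"
      by (intro continuous_on_ereal continuous_intros)
    then show ?thesis
      using real by (simp add: closed_Collect_le)
  qed auto
  moreover have "{y. conj_fun g y \<le> c} = (\<Inter>x. {y. ereal (inner x y) - g x \<le> c})"
    unfolding conj_fun_def by (auto simp: SUP_le_iff)
  ultimately show "closed {y. conj_fun g y \<le> c}" by auto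
qed

lemma proper_fun_conj_fun:
  assumes "proper_fun g" "y \<in> edom (conj_fun g)"
  shows "proper_fun (conj_fun g)"
  using assms conj_fun_gt_minf unfolding proper_fun_def edom_def by blast

lemma subdiff_edom: "v \<in> subdiff h x \<Longrightarrow> x \<in> edom h"
  unfolding subdiff_def edom_def by auto

lemma subdiff_real_ineq:
  assumes "proper_fun h" "v \<in> subdiff h x" "z \<in> edom h"
  shows "real_of_ereal (h x) + inner v (z - x) \<le> real_of_ereal (h z)"
proof -
  have "h z \<ge> h x + ereal (inner v (z - x))"
    using assms(2) unfolding subdiff_def by blast
  then show ?thesis
    using assms(1,3) subdiff_edom[OF assms(2)] unfolding proper_fun_def edom_def
    by (cases "h x"; cases "h z") auto
qed

lemma convex_on_gradient_ineq:
  fixes F :: "'a::real_inner \<Rightarrow> real"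
  assumes cvx: "convex_on S F" and "c \<in> S" "a \<in> S" and deriv: "GDERIV F c :> D"
  shows "F c + inner D (a - c) \<le> F a"
proof -
  define l where "l = (\<lambda>t::real. c + t *\<^sub>R (a - c))"
  have "(l has_derivative (\<lambda>t. t *\<^sub>R (a - c))) (at 0)"
    unfolding l_def by (auto intro!: derivative_eq_intros)
  moreover have "(F has_derivative (\<lambda>h. inner h D)) (at (l 0))"
    using deriv by (simp add: l_def gderiv_def)
  ultimately have "((F \<circ> l) has_derivative (\<lambda>h. inner h D) \<circ> (\<lambda>t. t *\<^sub>R (a - c))) (at 0)"
    by (rule diff_chain_at)
  then have "((F \<circ> l) has_real_derivative inner D (a - c)) (at 0)"
    by (rule has_derivative_imp_has_field_derivative) (simp add: inner_commute)
  then have "((\<lambda>t. (F (l t) - F c) / t) \<longlongrightarrow> inner D (a - c)) (at_right 0)"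
    by (auto simp: DERIV_def l_def intro: tendsto_mono[OF at_le])
  moreover have "\<forall>\<^sub>F t in at_right 0. (F (l t) - F c) / t \<le> F a - F c"
    unfolding eventually_at_right_field
  proof (intro exI[of _ 1] conjI allI impI)
    fix t :: real assume t: "0 < t" "t < 1"
    have "F (l t) = F ((1 - t) *\<^sub>R c + t *\<^sub>R a)"
      by (simp add: l_def algebra_simps)
    also have "\<dots> \<le> (1 - t) * F c + t * F a"
      using convex_onD[OF cvx, of t c a] assms t by simp
    finally have "F (l t) - F c \<le> (F a - F c) * t"
      by (simp add: algebra_simps)
    then show "(F (l t) - F c) / t \<le> F a - F c"
      using t by (simp add: pos_divide_le_eq)
  qed simp
  ultimately have "inner D (a - c) \<le> F a - F c"
    by (rule tendsto_upperbound) simp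
  then show ?thesis by simp
qed

lemma ess_smooth_grad:
  assumes "ess_smooth h" "z \<in> interior (edom h)"
  shows "GDERIV (\<lambda>w. real_of_ereal (h w)) z :> grad h z"
proof -
  have "\<exists>D. GDERIV (\<lambda>w. real_of_ereal (h w)) z :> D"
    using assms unfolding ess_smooth_def by blast
  then show ?thesis
    unfolding grad_def by (rule someI_ex)
qed

definition bregman_real :: "('a::real_inner \<Rightarrow> ereal) \<Rightarrow> 'a \<Rightarrow> 'a \<Rightarrow> real" where
  "bregman_real h a c = real_of_ereal (h a) - real_of_ereal (h c) - inner (grad h c) (a - c)"

lemma bregman_eq_bregman_real:
  assumes "proper_fun h" "a \<in> edom h" "c \<in> interior (edom h)"
  shows "bregman h a c = ereal (bregman_real h a c)"
proof -
  have "c \<in> edom h"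
    using assms(3) interior_subset by blast
  then show ?thesis
    using assms unfolding bregman_def bregman_real_def proper_fun_def edom_def
    by (cases "h a"; cases "h c") auto
qed

lemma bregman_real_nonneg:
  assumes "legendre h" "a \<in> edom h" "c \<in> interior (edom h)"
  shows "0 \<le> bregman_real h a c"
proof -
  have "convex_on (edom h) (\<lambda>x. real_of_ereal (h x))"
    using assms(1) convex_on_real_of_convex_fun unfolding legendre_def Gamma0_def by blast
  moreover have "GDERIV (\<lambda>w. real_of_ereal (h w)) c :> grad h c"
    using assms(1,3) ess_smooth_grad unfolding legendre_def by blast
  ultimately show ?thesis
    using convex_on_gradient_ineq assms(2,3) interior_subset
    unfolding bregman_real_def by fastforce
qed

lemma bregman_real_self [simp]: "bregman_real h a a = 0"
  by (simp add: bregman_real_def)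

lemma bregman_real_four_point:
  "inner (grad h c - grad h c') (a - a')
    = bregman_real h a' c - bregman_real h a' c' + bregman_real h a c' - bregman_real h a c"
  by (simp add: bregman_real_def inner_diff_left inner_diff_right algebra_simps)

definition lagr_real :: "(real^'n \<Rightarrow> ereal) \<Rightarrow> (real^'m \<Rightarrow> ereal) \<Rightarrow> real^'n^'m \<Rightarrow> real^'m
    \<Rightarrow> real^'n \<Rightarrow> real^'m \<Rightarrow> real" where
  "lagr_real f g A b x y
    = real_of_ereal (f x) + inner (A *v x - b) y - real_of_ereal (conj_fun g y)"

lemma lagr_eq_lagr_real:
  assumes "proper_fun f" "proper_fun g" "x \<in> edom f" "y \<in> edom (conj_fun g)"
  shows "lagr f g A b x y = ereal (lagr_real f g A b x y)"
  using assms conj_fun_gt_minf[OF assms(2), of y]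
  unfolding lagr_def lagr_real_def proper_fun_def edom_def
  by (cases "f x"; cases "conj_fun g y") auto

lemma lagr_eq_infinity: "x \<notin> edom f \<Longrightarrow> lagr f g A b x y = \<infinity>"
  by (simp add: lagr_def not_edom_eq_infinity)

lemma lagr_eq_minfinity:
  assumes "proper_fun f" "x \<in> edom f" "y \<notin> edom (conj_fun g)"
  shows "lagr f g A b x y = -\<infinity>"
  using assms not_edom_eq_infinity[OF assms(3)]
  unfolding lagr_def proper_fun_def edom_def by (cases "f x") auto

lemma kkt_edom:
  assumes "(v, u) \<in> kkt f g A b x y"
  shows "x \<in> edom f" "y \<in> edom (conj_fun g)"
  using assms subdiff_edom unfolding kkt_def by blast+

text \<open>Adding the subgradient inequalities of \<open>f\<close> at \<open>s\<close> and of \<open>g\<^sup>*\<close> at \<open>y'\<close>, the coupling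
  terms through \<open>A\<close> cancel.\<close>

lemma kkt_lagr_real_gap:
  assumes "proper_fun f" "proper_fun g" and vu: "(v, u) \<in> kkt f g A b s y'"
    and "x \<in> edom f" "y \<in> edom (conj_fun g)"
  shows "lagr_real f g A b s y - lagr_real f g A b x y' \<le> inner v (s - x) + inner u (y' - y)"
proof -
  have "real_of_ereal (f s) + inner (v - transpose A *v y') (x - s) \<le> real_of_ereal (f x)"
    using vu assms(1,4) subdiff_real_ineq unfolding kkt_def by blast
  moreover have "real_of_ereal (conj_fun g y') + inner (u - (b - A *v s)) (y - y')
      \<le> real_of_ereal (conj_fun g y)"
    using vu subdiff_real_ineq[OF proper_fun_conj_fun[OF assms(2,5)]] assms(5)
    unfolding kkt_def by blast
  moreover have "inner (transpose A *v y') (x - s) = inner y' (A *v x) - inner y' (A *v s)"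
    by (simp add: dot_lmul_matrix inner_diff_right)
  ultimately show ?thesis
    unfolding lagr_real_def by (simp add: inner_diff_left inner_diff_right inner_commute)
qed

lemma convex_on_lagr_real:
  assumes "convex_fun f" "proper_fun f"
  shows "convex_on (edom f) (\<lambda>x. lagr_real f g A b x y)"
proof (rule convex_onI)
  fix t :: real and x x' assume "0 < t" "t < 1" "x \<in> edom f" "x' \<in> edom f"
  then have "real_of_ereal (f ((1 - t) *\<^sub>R x + t *\<^sub>R x'))
      \<le> (1 - t) * real_of_ereal (f x) + t * real_of_ereal (f x')"
    using convex_onD[OF convex_on_real_of_convex_fun[OF assms]] by simp
  moreover have "inner (A *v ((1 - t) *\<^sub>R x + t *\<^sub>R x') - b) y
      = (1 - t) * inner (A *v x - b) y + t * inner (A *v x' - b) y"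
    by (simp add: matrix_vector_right_distrib matrix_vector_mult_scaleR inner_diff_left algebra_simps)
  ultimately show "lagr_real f g A b ((1 - t) *\<^sub>R x + t *\<^sub>R x') y
      \<le> (1 - t) * lagr_real f g A b x y + t * lagr_real f g A b x' y"
    unfolding lagr_real_def by (simp add: algebra_simps)
qed (rule convex_edom[OF assms(1)])

lemma concave_on_lagr_real:
  assumes "proper_fun g"
  shows "concave_on (edom (conj_fun g)) (\<lambda>y. lagr_real f g A b x y)"
  unfolding concave_on_def
proof (rule convex_onI)
  fix t :: real and y y' assume "0 < t" "t < 1" "y \<in> edom (conj_fun g)" "y' \<in> edom (conj_fun g)"
  then have "real_of_ereal (conj_fun g ((1 - t) *\<^sub>R y + t *\<^sub>R y'))
      \<le> (1 - t) * real_of_ereal (conj_fun g y) + t * real_of_ereal (conj_fun g y')"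
    using convex_onD[OF convex_on_real_of_convex_fun[OF convex_fun_conj_fun[OF assms]
          proper_fun_conj_fun[OF assms \<open>y \<in> _\<close>]]] by simp
  then show "- lagr_real f g A b x ((1 - t) *\<^sub>R y + t *\<^sub>R y')
      \<le> (1 - t) * - lagr_real f g A b x y + t * - lagr_real f g A b x y'"
    unfolding lagr_real_def by (simp add: inner_add_right algebra_simps)
qed (rule convex_edom[OF convex_fun_conj_fun[OF assms]])

lemma lsc_fun_le_liminf:
  assumes "lsc_fun h" "z \<longlonglongrightarrow> z0"
  shows "h z0 \<le> liminf (\<lambda>K. h (z K))"
  unfolding le_Liminf_iff
proof (intro allI impI)
  fix a assume "a < h z0"
  moreover have "open (- {x. h x \<le> a})"
    using assms(1) unfolding lsc_fun_def by auto
  ultimately have "\<forall>\<^sub>F K in sequentially. z K \<in> - {x. h x \<le> a}"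
    using assms(2) topological_tendstoD by fastforce
  then show "\<forall>\<^sub>F K in sequentially. a < h (z K)"
    by (auto elim: eventually_mono)
qed

lemma lsc_fun_add_le_limit:
  assumes "lsc_fun f" "lsc_fun g" "\<And>x. f x > -\<infinity>" "\<And>y. g y > -\<infinity>"
    and "p \<longlonglongrightarrow> p0" "q \<longlonglongrightarrow> q0" "c \<longlonglongrightarrow> c0"
    and "\<And>K. f (p K) + g (q K) \<le> c K"
  shows "f p0 + g q0 \<le> c0"
proof -
  have lf: "f p0 \<le> liminf (\<lambda>K. f (p K))" and lg: "g q0 \<le> liminf (\<lambda>K. g (q K))"
    using lsc_fun_le_liminf assms by blast+
  then have "f p0 + g q0 \<le> liminf (\<lambda>K. f (p K)) + liminf (\<lambda>K. g (q K))"
    by (rule add_mono)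
  also have "\<dots> \<le> liminf (\<lambda>K. f (p K) + g (q K))"
    using lf lg assms(3,4)[THEN order.strict_trans2] by (intro ereal_liminf_add_mono) force
  also have "\<dots> \<le> liminf c"
    using assms(8) by (intro Liminf_mono) simp
  also have "\<dots> = c0"
    using assms(7) by (simp add: lim_imp_Liminf)
  finally show ?thesis .
qed

text \<open>For \<open>0 < t \<le> 1\<close> the point \<open>(1 - t) z + t z0\<close> lies in the interior of \<open>C\<close>; let \<open>t \<rightarrow> 0\<close>.\<close>

lemma convex_on_lower_bound_closure:
  fixes h :: "'a::euclidean_space \<Rightarrow> real"
  assumes "convex C" "convex_on S h" "z0 \<in> interior C" "z0 \<in> S" "S \<subseteq> closure C"
    and bound: "\<And>z. z \<in> C \<Longrightarrow> z \<in> S \<Longrightarrow> B \<le> h z"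
    and "z \<in> S"
  shows "B \<le> h z"
proof -
  have "B \<le> (1 - t) * h z + t * h z0" if t: "0 < t" "t < 1" for t
  proof -
    have "z - t *\<^sub>R (z - z0) \<in> interior C"
      using assms t by (intro mem_interior_closure_convex_shrink) auto
    moreover have "z - t *\<^sub>R (z - z0) = (1 - t) *\<^sub>R z + t *\<^sub>R z0"
      by (simp add: algebra_simps)
    ultimately have "B \<le> h ((1 - t) *\<^sub>R z + t *\<^sub>R z0)"
      using bound interior_subset convex_onD[OF assms(2)] convex_on_imp_convex[OF assms(2)] assms(4,7) t
      by (metis convexD_alt less_imp_le subsetD)
    also have "\<dots> \<le> (1 - t) * h z + t * h z0"
      using convex_onD[OF assms(2)] assms(4,7) t by simp
    finally show ?thesis .
  qed
  then have "\<forall>\<^sub>F t in at_right 0. B \<le> (1 - t) * h z + t * h z0"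
    unfolding eventually_at_right_field by (intro exI[of _ 1]) auto
  moreover have "((\<lambda>t. (1 - t) * h z + t * h z0) \<longlongrightarrow> (1 - 0) * h z + 0 * h z0) (at_right 0)"
    by (intro tendsto_intros)
  ultimately show ?thesis
    by (intro tendsto_lowerbound) auto
qed

locale bregman_prox_alm =
  fixes f :: "real^'n \<Rightarrow> ereal" and g :: "real^'m \<Rightarrow> ereal"
    and A :: "real^'n^'m" and b :: "real^'m"
    and \<psi> :: "real^'n \<Rightarrow> ereal" and \<phi> :: "real^'m \<Rightarrow> ereal"
    and s xx v :: "nat \<Rightarrow> real^'n" and yy u :: "nat \<Rightarrow> real^'m"
    and \<sigma> \<rho> :: "nat \<Rightarrow> real" and \<sigma>0 :: real
  assumes f: "Gamma0 f" and g: "Gamma0 g"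
    and leg_psi: "legendre \<psi>" and leg_phi: "legendre \<phi>"
    and x0: "xx 0 \<in> interior (edom \<psi>)" and y0: "yy 0 \<in> interior (edom \<phi>)"
    and sigma0: "\<sigma>0 > 0" and sigma: "\<And>k. \<sigma> k \<ge> \<sigma>0"
    and rho: "\<And>k. 0 \<le> \<rho> k \<and> \<rho> k < 1"
    and s_dom: "\<And>k. s k \<in> edom \<psi>"
    and incl: "\<And>k. (v k, u k) \<in> kkt f g A b (s k) (yy (Suc k))"
    and x_int: "\<And>k. xx (Suc k) \<in> interior (edom \<psi>)"
    and x_upd: "\<And>k. grad \<psi> (xx (Suc k)) = grad \<psi> (xx k) - \<sigma> k *\<^sub>R v k"
    and y_int: "\<And>k. yy (Suc k) \<in> interior (edom \<phi>)"
    and y_upd: "\<And>k. grad \<phi> (yy (Suc k)) = grad \<phi> (yy k) - \<sigma> k *\<^sub>R u k"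
    and inexact: "\<And>k. bregman \<psi> (s k) (xx (Suc k))
        \<le> ereal (\<rho> k) * (bregman \<psi> (s k) (xx k) + bregman \<phi> (yy (Suc k)) (yy k))"
begin

definition sigma_sum :: "nat \<Rightarrow> real" where
  "sigma_sum K = (\<Sum>k\<le>K. \<sigma> k)"

definition ergodic_s :: "nat \<Rightarrow> real^'n" where
  "ergodic_s K = (1 / sigma_sum K) *\<^sub>R (\<Sum>k\<le>K. \<sigma> k *\<^sub>R s k)"

definition ergodic_y :: "nat \<Rightarrow> real^'m" where
  "ergodic_y K = (1 / sigma_sum K) *\<^sub>R (\<Sum>k\<le>K. \<sigma> k *\<^sub>R yy (Suc k))"

definition potential :: "real^'n \<Rightarrow> real^'m \<Rightarrow> nat \<Rightarrow> real" where
  "potential x y k = bregman_real \<psi> x (xx k) + bregman_real \<phi> y (yy k)"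

lemma proper_f: "proper_fun f" and proper_g: "proper_fun g" and convex_f: "convex_fun f"
  and lsc_f: "lsc_fun f" and proper_psi: "proper_fun \<psi>" and proper_phi: "proper_fun \<phi>"
  and convex_edom_psi: "convex (edom \<psi>)" and convex_edom_phi: "convex (edom \<phi>)"
  using f g leg_psi leg_phi convex_edom unfolding Gamma0_def legendre_def by auto

lemma sigma_pos: "0 < \<sigma> k"
  using sigma[of k] sigma0 by linarith

lemma sigma_sum_ge: "real (Suc K) * \<sigma>0 \<le> sigma_sum K"
  using sum_mono[of "{..K}" "\<lambda>_. \<sigma>0" \<sigma>] sigma unfolding sigma_sum_def by simp

lemma sigma_sum_pos: "0 < sigma_sum K"
proof -
  have "0 < real (Suc K) * \<sigma>0"
    using sigma0 by simp
  then show ?thesis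
    using sigma_sum_ge[of K] by linarith
qed

lemma xx_interior: "xx k \<in> interior (edom \<psi>)"
  using x0 x_int by (cases k) auto

lemma yy_interior: "yy k \<in> interior (edom \<phi>)"
  using y0 y_int by (cases k) auto

lemma yy_edom: "yy k \<in> edom \<phi>"
  using yy_interior interior_subset by blast

lemma ergodic_s_edom: "ergodic_s K \<in> edom f"
proof -
  have "ergodic_s K = (\<Sum>k\<le>K. (\<sigma> k / sigma_sum K) *\<^sub>R s k)"
    by (simp add: ergodic_s_def scaleR_sum_right)
  also have "\<dots> \<in> edom f"
    using convex_edom[OF convex_f] kkt_edom(1)[OF incl] sigma_pos sigma_sum_pos[of K]
    by (intro convex_sum) (auto simp: sigma_sum_def sum_divide_distrib[symmetric] less_imp_le)
  finally show ?thesis .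
qed

lemma ergodic_y_edom: "ergodic_y K \<in> edom (conj_fun g)"
proof -
  have "ergodic_y K = (\<Sum>k\<le>K. (\<sigma> k / sigma_sum K) *\<^sub>R yy (Suc k))"
    by (simp add: ergodic_y_def scaleR_sum_right)
  also have "\<dots> \<in> edom (conj_fun g)"
    using convex_edom[OF convex_fun_conj_fun[OF proper_g]] kkt_edom(2)[OF incl] sigma_pos sigma_sum_pos[of K]
    by (intro convex_sum) (auto simp: sigma_sum_def sum_divide_distrib[symmetric] less_imp_le)
  finally show ?thesis .
qed

lemma inexact_bregman_real:
  "bregman_real \<psi> (s k) (xx (Suc k)) \<le> bregman_real \<psi> (s k) (xx k) + bregman_real \<phi> (yy (Suc k)) (yy k)"
proof -
  let ?d = "bregman_real \<psi> (s k) (xx k) + bregman_real \<phi> (yy (Suc k)) (yy k)"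
  have "bregman_real \<psi> (s k) (xx (Suc k)) \<le> \<rho> k * ?d"
    using inexact[of k] s_dom xx_interior yy_edom yy_interior
    by (simp add: bregman_eq_bregman_real proper_psi proper_phi)
  also have "\<dots> \<le> ?d"
    using rho[of k] bregman_real_nonneg[OF leg_psi s_dom xx_interior]
      bregman_real_nonneg[OF leg_phi yy_edom yy_interior]
    by (intro mult_left_le_one_le) auto
  finally show ?thesis .
qed

lemma potential_descent:
  assumes "x \<in> edom f" "y \<in> edom (conj_fun g)"
  shows "\<sigma> k * (lagr_real f g A b (s k) y - lagr_real f g A b x (yy (Suc k)))
    \<le> potential x y k - potential x y (Suc k)"
proof -
  have "\<sigma> k * inner (v k) (s k - x) = inner (grad \<psi> (xx k) - grad \<psi> (xx (Suc k))) (s k - x)"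
    by (simp add: x_upd)
  also have "\<dots> = bregman_real \<psi> x (xx k) - bregman_real \<psi> x (xx (Suc k))
      + bregman_real \<psi> (s k) (xx (Suc k)) - bregman_real \<psi> (s k) (xx k)"
    by (rule bregman_real_four_point)
  finally have v_step: "\<sigma> k * inner (v k) (s k - x) = \<dots>" .
  have "\<sigma> k * inner (u k) (yy (Suc k) - y) = inner (grad \<phi> (yy k) - grad \<phi> (yy (Suc k))) (yy (Suc k) - y)"
    by (simp add: y_upd)
  also have "\<dots> = bregman_real \<phi> y (yy k) - bregman_real \<phi> y (yy (Suc k))
      - bregman_real \<phi> (yy (Suc k)) (yy k)"
    using bregman_real_four_point[of \<phi> "yy k" "yy (Suc k)" "yy (Suc k)" y] by simp
  finally have u_step: "\<sigma> k * inner (u k) (yy (Suc k) - y) = \<dots>" .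
  have "\<sigma> k * (lagr_real f g A b (s k) y - lagr_real f g A b x (yy (Suc k)))
      \<le> \<sigma> k * (inner (v k) (s k - x) + inner (u k) (yy (Suc k) - y))"
    using kkt_lagr_real_gap[OF proper_f proper_g incl assms] sigma_pos[of k]
    by (intro mult_left_mono) auto
  then show ?thesis
    using v_step u_step inexact_bregman_real[of k] unfolding potential_def
    by (simp add: distrib_left)
qed

lemma weighted_gap_sum_le:
  assumes "x \<in> edom \<psi>" "y \<in> edom \<phi>" "x \<in> edom f" "y \<in> edom (conj_fun g)"
  shows "(\<Sum>k\<le>K. \<sigma> k * (lagr_real f g A b (s k) y - lagr_real f g A b x (yy (Suc k))))
    \<le> potential x y 0"
proof -
  have "(\<Sum>k\<le>K. \<sigma> k * (lagr_real f g A b (s k) y - lagr_real f g A b x (yy (Suc k))))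
      \<le> (\<Sum>k\<le>K. potential x y k - potential x y (Suc k))"
    using potential_descent[OF assms(3,4)] by (rule sum_mono)
  also have "\<dots> = potential x y 0 - potential x y (Suc K)"
    by (rule sum_telescope)
  also have "\<dots> \<le> potential x y 0"
    using bregman_real_nonneg[OF leg_psi assms(1) xx_interior[of "Suc K"]]
      bregman_real_nonneg[OF leg_phi assms(2) yy_interior[of "Suc K"]]
    unfolding potential_def by simp
  finally show ?thesis .
qed

lemma ergodic_gap_real:
  assumes "x \<in> edom \<psi>" "y \<in> edom \<phi>" "x \<in> edom f" "y \<in> edom (conj_fun g)"
  shows "lagr_real f g A b (ergodic_s K) y - lagr_real f g A b x (ergodic_y K)
    \<le> potential x y 0 / sigma_sum K"
proof -
  define w where "w k = \<sigma> k / sigma_sum K" for k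
  have w_sum: "(\<Sum>k\<le>K. w k) = 1"
    using sigma_sum_pos[of K] by (simp add: w_def sigma_sum_def flip: sum_divide_distrib)
  have w_nonneg: "0 \<le> w k" for k
    using sigma_pos[of k] sigma_sum_pos[of K] by (simp add: w_def)
  have "ergodic_s K = (\<Sum>k\<le>K. w k *\<^sub>R s k)" "ergodic_y K = (\<Sum>k\<le>K. w k *\<^sub>R yy (Suc k))"
    by (simp_all add: ergodic_s_def ergodic_y_def w_def scaleR_sum_right)
  moreover have "lagr_real f g A b (\<Sum>k\<le>K. w k *\<^sub>R s k) y
      \<le> (\<Sum>k\<le>K. w k * lagr_real f g A b (s k) y)"
    by (rule convex_on_sum[OF _ _ convex_on_lagr_real[OF convex_f proper_f] w_sum w_nonneg
          kkt_edom(1)[OF incl]]) auto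
  moreover have "- lagr_real f g A b x (\<Sum>k\<le>K. w k *\<^sub>R yy (Suc k))
      \<le> (\<Sum>k\<le>K. w k * - lagr_real f g A b x (yy (Suc k)))"
    by (rule convex_on_sum[OF _ _ concave_on_lagr_real[OF proper_g, unfolded concave_on_def]
          w_sum w_nonneg kkt_edom(2)[OF incl]]) auto
  ultimately have "lagr_real f g A b (ergodic_s K) y - lagr_real f g A b x (ergodic_y K)
      \<le> (\<Sum>k\<le>K. w k * (lagr_real f g A b (s k) y - lagr_real f g A b x (yy (Suc k))))"
    by (simp add: right_diff_distrib sum_subtractf sum_negf)
  also have "\<dots> = (\<Sum>k\<le>K. \<sigma> k * (lagr_real f g A b (s k) y - lagr_real f g A b x (yy (Suc k))))
      / sigma_sum K"
    by (simp add: w_def sum_divide_distrib)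
  also have "\<dots> \<le> potential x y 0 / sigma_sum K"
    using weighted_gap_sum_le[OF assms] sigma_sum_pos[of K] by (intro divide_right_mono) auto
  finally show ?thesis .
qed

lemma ergodic_gap:
  assumes "x \<in> edom \<psi>" "y \<in> edom \<phi>"
  shows "lagr f g A b (ergodic_s K) y - lagr f g A b x (ergodic_y K)
    \<le> (bregman \<psi> x (xx 0) + bregman \<phi> y (yy 0)) / ereal (sigma_sum K)"
proof (cases "x \<in> edom f \<and> y \<in> edom (conj_fun g)")
  case True
  then show ?thesis
    using ergodic_gap_real[OF assms, of K] sigma_sum_pos[of K] ergodic_s_edom ergodic_y_edom
      xx_interior yy_interior assms
    by (simp add: lagr_eq_lagr_real bregman_eq_bregman_real proper_f proper_g proper_psi
        proper_phi potential_def)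
next
  case False
  have "lagr f g A b (ergodic_s K) y < \<infinity>" "lagr f g A b x (ergodic_y K) > -\<infinity>"
    using ergodic_s_edom ergodic_y_edom proper_f proper_g
    by (cases "y \<in> edom (conj_fun g)"; cases "x \<in> edom f";
        simp add: lagr_eq_lagr_real lagr_eq_minfinity lagr_eq_infinity)+
  moreover have "lagr f g A b (ergodic_s K) y = -\<infinity> \<or> lagr f g A b x (ergodic_y K) = \<infinity>"
    using False ergodic_s_edom lagr_eq_minfinity[OF proper_f] lagr_eq_infinity by blast
  ultimately have "lagr f g A b (ergodic_s K) y - lagr f g A b x (ergodic_y K) = -\<infinity>"
    by (cases "lagr f g A b (ergodic_s K) y"; cases "lagr f g A b x (ergodic_y K)") auto
  then show ?thesis by simp
qed

lemma sigma_sum_at_top: "filterlim sigma_sum at_top sequentially"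
proof (rule filterlim_at_top_mono)
  show "filterlim (\<lambda>K. real (Suc K) * \<sigma>0) at_top sequentially"
    by (rule filterlim_at_top_mult_tendsto_pos[OF tendsto_const sigma0
          filterlim_compose[OF filterlim_real_sequentially filterlim_Suc]])
qed (use sigma_sum_ge in simp)

lemma ergodic_limit_saddle_on_edom:
  assumes "strict_mono r" "(\<lambda>K. ergodic_s (r K)) \<longlonglongrightarrow> p" "(\<lambda>K. ergodic_y (r K)) \<longlonglongrightarrow> q"
    and "x \<in> edom \<psi>" "y \<in> edom \<phi>" "x \<in> edom f" "y \<in> edom (conj_fun g)"
  shows "p \<in> edom f" "q \<in> edom (conj_fun g)" "lagr_real f g A b p y \<le> lagr_real f g A b x q"
proof -
  let ?F = "\<lambda>z. real_of_ereal (f z)" and ?G = "\<lambda>w. real_of_ereal (conj_fun g w)"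
  define c where "c K = ?F x + ?G y + inner (A *v x - b) (ergodic_y (r K))
      - inner (A *v ergodic_s (r K) - b) y + potential x y 0 / sigma_sum (r K)" for K
  have c_bound: "f (ergodic_s (r K)) + conj_fun g (ergodic_y (r K)) \<le> ereal (c K)" for K
  proof -
    have "?F (ergodic_s (r K)) + ?G (ergodic_y (r K)) \<le> c K"
      using ergodic_gap_real[OF assms(4-7), of "r K"] unfolding c_def lagr_real_def by simp
    then show ?thesis
      using ergodic_s_edom[of "r K"] ergodic_y_edom[of "r K"] proper_f
        conj_fun_gt_minf[OF proper_g, of "ergodic_y (r K)"]
      unfolding edom_def proper_fun_def
      by (cases "f (ergodic_s (r K))"; cases "conj_fun g (ergodic_y (r K))") auto
  qed
  moreover have "(\<lambda>K. potential x y 0 / sigma_sum (r K)) \<longlonglongrightarrow> 0"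
    using filterlim_compose[OF sigma_sum_at_top filterlim_subseq[OF assms(1)]]
    by (intro tendsto_divide_0[OF tendsto_const] filterlim_at_top_imp_at_infinity)
  moreover have "(\<lambda>K. A *v ergodic_s (r K)) \<longlonglongrightarrow> A *v p"
    using assms(2) by (rule bounded_linear.tendsto[OF matrix_vector_mul_bounded_linear])
  ultimately have "c \<longlonglongrightarrow> ?F x + ?G y + inner (A *v x - b) q - inner (A *v p - b) y + 0"
    unfolding c_def by (intro tendsto_add tendsto_diff tendsto_inner tendsto_const assms(3))
  then have sum_le: "f p + conj_fun g q \<le> ereal (?F x + ?G y + inner (A *v x - b) q - inner (A *v p - b) y)"
    using proper_f conj_fun_gt_minf[OF proper_g] assms(2,3) unfolding proper_fun_def
    by (intro lsc_fun_add_le_limit[OF lsc_f lsc_fun_conj_fun _ _ _ _ _ c_bound]) auto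
  then show p: "p \<in> edom f" and q: "q \<in> edom (conj_fun g)"
    using proper_f conj_fun_gt_minf[OF proper_g, of q] unfolding edom_def proper_fun_def
    by (cases "f p"; cases "conj_fun g q"; simp)+
  show "lagr_real f g A b p y \<le> lagr_real f g A b x q"
    using sum_le p q proper_f conj_fun_gt_minf[OF proper_g, of q]
    unfolding lagr_real_def edom_def proper_fun_def
    by (cases "f p"; cases "conj_fun g q") auto
qed

lemma ergodic_limit_saddle:
  assumes qual: "\<exists>x y. x \<in> interior (edom \<psi>) \<and> y \<in> interior (edom \<phi>) \<and> kkt f g A b x y \<noteq> {}"
    and dom_f: "edom f \<subseteq> closure (edom \<psi>)" and dom_g: "edom (conj_fun g) \<subseteq> closure (edom \<phi>)"
    and r: "strict_mono r" and lim: "(\<lambda>K. (ergodic_s (r K), ergodic_y (r K))) \<longlonglongrightarrow> (p, q)"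
  shows "lagr f g A b p y \<le> lagr f g A b x q"
proof -
  obtain xq yq v0 u0 where xq: "xq \<in> interior (edom \<psi>)" and yq: "yq \<in> interior (edom \<phi>)"
    and kkt_q: "(v0, u0) \<in> kkt f g A b xq yq"
    using qual by auto
  note xq_f = kkt_edom(1)[OF kkt_q] and yq_g = kkt_edom(2)[OF kkt_q]
  have xq_psi: "xq \<in> edom \<psi>" and yq_phi: "yq \<in> edom \<phi>"
    using xq yq interior_subset by blast+
  note on_edom = ergodic_limit_saddle_on_edom[OF r tendsto_fst[OF lim, simplified]
      tendsto_snd[OF lim, simplified]]
  have p: "p \<in> edom f" and q: "q \<in> edom (conj_fun g)"
    using on_edom(1,2)[OF xq_psi yq_phi xq_f yq_g] .
  have extend_y: "lagr_real f g A b p y' \<le> lagr_real f g A b x' q"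
    if x': "x' \<in> edom \<psi>" "x' \<in> edom f" and y': "y' \<in> edom (conj_fun g)" for x' y'
  proof -
    have "- lagr_real f g A b x' q \<le> - lagr_real f g A b p y'"
    proof (rule convex_on_lower_bound_closure[OF convex_edom_phi _ yq yq_g dom_g _ y'])
      show "convex_on (edom (conj_fun g)) (\<lambda>y. - lagr_real f g A b p y)"
        using concave_on_lagr_real[OF proper_g] unfolding concave_on_def .
      show "- lagr_real f g A b x' q \<le> - lagr_real f g A b p z"
        if "z \<in> edom \<phi>" "z \<in> edom (conj_fun g)" for z
        using on_edom(3)[OF x'(1) that(1) x'(2) that(2)] by simp
    qed
    then show ?thesis by simp
  qed
  have extend_x: "lagr_real f g A b p y' \<le> lagr_real f g A b x' q"
    if "x' \<in> edom f" "y' \<in> edom (conj_fun g)" for x' y'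
    by (rule convex_on_lower_bound_closure[OF convex_edom_psi convex_on_lagr_real[OF convex_f proper_f]
          xq xq_f dom_f extend_y[OF _ _ that(2)] that(1)])
  show ?thesis
  proof (cases "x \<in> edom f \<and> y \<in> edom (conj_fun g)")
    case True
    then show ?thesis
      using extend_x p q by (simp add: lagr_eq_lagr_real proper_f proper_g)
  next
    case False
    then show ?thesis
      using lagr_eq_infinity[of x f g A b q] lagr_eq_minfinity[OF proper_f p, of y g A b] by auto
  qed
qed

end

theorem mainTheorem16:
  fixes f :: "real^'n \<Rightarrow> ereal" and g :: "real^'m \<Rightarrow> ereal"
    and A :: "real^'n^'m" and b :: "real^'m"
    and \<psi> :: "real^'n \<Rightarrow> ereal" and \<phi> :: "real^'m \<Rightarrow> ereal"
    and s xx v :: "nat \<Rightarrow> real^'n" and yy u :: "nat \<Rightarrow> real^'m"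
    and \<sigma> \<rho> :: "nat \<Rightarrow> real" and \<sigma>0 :: real
  assumes f: "Gamma0 f" and g: "Gamma0 g"
    and leg_psi: "legendre \<psi>" and leg_phi: "legendre \<phi>"
    and qual: "\<exists>x y. x \<in> interior (edom \<psi>) \<and> y \<in> interior (edom \<phi>) \<and> kkt f g A b x y \<noteq> {}"
    and x0: "xx 0 \<in> interior (edom \<psi>)" and y0: "yy 0 \<in> interior (edom \<phi>)"
    and sigma0: "\<sigma>0 > 0" and sigma: "\<And>k. \<sigma> k \<ge> \<sigma>0"
    and rho: "\<And>k. 0 \<le> \<rho> k \<and> \<rho> k < 1"
    and s_dom: "\<And>k. s k \<in> edom \<psi>"
    and incl: "\<And>k. (v k, u k) \<in> kkt f g A b (s k) (yy (Suc k))"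
    and x_int: "\<And>k. xx (Suc k) \<in> interior (edom \<psi>)"
    and x_upd: "\<And>k. grad \<psi> (xx (Suc k)) = grad \<psi> (xx k) - \<sigma> k *\<^sub>R v k"
    and y_int: "\<And>k. yy (Suc k) \<in> interior (edom \<phi>)"
    and y_upd: "\<And>k. grad \<phi> (yy (Suc k)) = grad \<phi> (yy k) - \<sigma> k *\<^sub>R u k"
    and inexact: "\<And>k. bregman \<psi> (s k) (xx (Suc k))
        \<le> ereal (\<rho> k) * (bregman \<psi> (s k) (xx k) + bregman \<phi> (yy (Suc k)) (yy k))"
  defines "sb \<equiv> \<lambda>K. (1 / (\<Sum>k\<le>K. \<sigma> k)) *\<^sub>R (\<Sum>k\<le>K. \<sigma> k *\<^sub>R s k)"
    and "yb \<equiv> \<lambda>K. (1 / (\<Sum>k\<le>K. \<sigma> k)) *\<^sub>R (\<Sum>k\<le>K. \<sigma> k *\<^sub>R yy (Suc k))"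
  shows "(\<forall>x \<in> edom \<psi>. \<forall>y \<in> edom \<phi>. \<forall>K.
            lagr f g A b (sb K) y - lagr f g A b x (yb K)
              \<le> (bregman \<psi> x (xx 0) + bregman \<phi> y (yy 0)) / ereal (\<Sum>k\<le>K. \<sigma> k))
       \<and> ((edom f \<subseteq> closure (edom \<psi>) \<and> edom (conj_fun g) \<subseteq> closure (edom \<phi>)) \<longrightarrow>
          (\<forall>p q. (\<exists>r. strict_mono r \<and> (\<lambda>K. (sb (r K), yb (r K))) \<longlonglongrightarrow> (p, q)) \<longrightarrow>
             (\<forall>x y. lagr f g A b p y \<le> lagr f g A b x q)))"
proof -
  interpret bregman_prox_alm f g A b \<psi> \<phi> s xx v yy u \<sigma> \<rho> \<sigma>0
    by unfold_locales (fact assms)+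
  have "sb = ergodic_s" "yb = ergodic_y"
    by (simp_all add: sb_def yb_def fun_eq_iff ergodic_s_def ergodic_y_def sigma_sum_def)
  then show ?thesis
    using ergodic_gap ergodic_limit_saddle[OF qual] by (auto simp: sigma_sum_def)
qed

end
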